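(* Let $L\ge2$ and let $C'=(\{0,\dots,L-1\},\delta')$ be a cellular automaton with neighborhood size $1$ and blank symbol $0$ (i.e. $\delta'(0,0,0)=0$). Define $\varphi(a)=1^{1+L-a}0^a1\in\{0,1\}^{L+2}$ for $a\in\{0,\dots,L-1\}$, and extend $\varphi$ to configurations $c:\mathbb{Z}\to\{0,\dots,L-1\}$ by $\varphi(c)(q(L+2)+k)=$ the $k$-th bit ($0\le k<L+2$, counting from $0$) of $\varphi(c(q))$. Let $r=2(L+2)$. Then there exists $\delta^{(2)}:\{0,1\}^{2r+1}\to\{0,1\}$ with $\delta^{(2)}(1,\dots,1)=1$ such that the binary cellular automaton $(\{0,1\},\delta^{(2)})$, started from $b_0=\varphi(c_0)$ where $c_0(u)=1$ if $u=0$ and $c_0(u)=0$ otherwise, produces configurations $b_0,b_1,\dots$ with $b_t=\varphi(c_t)$ for all $t\ge0$, where $c_0,c_1,\dots$ are the configurations produced by $C'$ from $c_0$.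
   Context: A cellular automaton $(A,\delta)$ with neighborhood size $r$ acts on configurations $c:\mathbb{Z}\to A$; one step maps $c$ to $c'$ with $c'(u)=\delta(c(u-r),\dots,c(u),\dots,c(u+r))$. *)

theory Defs
  imports Main
begin

definition ca_step :: "nat \<Rightarrow> ('a list \<Rightarrow> 'a) \<Rightarrow> (int \<Rightarrow> 'a) \<Rightarrow> (int \<Rightarrow> 'a)" where
  "ca_step r \<delta> c u = \<delta> (map (\<lambda>i. c (u + i)) [- int r .. int r])"

definition ca_run :: "nat \<Rightarrow> ('a list \<Rightarrow> 'a) \<Rightarrow> (int \<Rightarrow> 'a) \<Rightarrow> nat \<Rightarrow> (int \<Rightarrow> 'a)" where
  "ca_run r \<delta> c0 t = (ca_step r \<delta> ^^ t) c0"

definition phi_sym :: "nat \<Rightarrow> nat \<Rightarrow> bool list" where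
  "phi_sym L a = replicate (1 + L - a) True @ replicate a False @ [True]"

definition phi_conf :: "nat \<Rightarrow> (int \<Rightarrow> nat) \<Rightarrow> (int \<Rightarrow> bool)" where
  "phi_conf L c n = phi_sym L (c (n div int (L + 2))) ! nat (n mod int (L + 2))"

end

theory Submission imports Defs begin

text \<open>A binary rule of radius \<open>2(L+2)\<close> exists as soon as the encoded successor bit at
  position \<open>n\<close> depends only on the window of \<open>\<phi>(c)\<close> around \<open>n\<close>, which covers the blocks
  \<open>q-1, q, q+1\<close> of \<open>q = n div (L+2)\<close>. Inside \<open>\<phi>(c)\<close> a \<open>0\<close> immediately followed by a \<open>1\<close>
  occurs only at offset \<open>L\<close> of a block holding a nonzero symbol. So if one of these three blocks
  is nonzero, the window reveals the offset \<open>n mod (L+2)\<close>, hence the three symbols, hence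
  the new symbol of block \<open>q\<close>. If all three are blank, the new symbol is \<open>\<delta>'(0,0,0) = 0\<close>,
  whose code \<open>1^(L+2)\<close> makes the offset irrelevant.\<close>

definition window :: "nat \<Rightarrow> (int \<Rightarrow> 'a) \<Rightarrow> int \<Rightarrow> 'a list" where
  "window r b n = map (\<lambda>i. b (n + i)) [- int r .. int r]"

lemma ca_step_window: "ca_step r \<delta> b n = \<delta> (window r b n)"
  by (simp add: ca_step_def window_def)

lemma window_eq_iff:
  "window r b n = window r b' n' \<longleftrightarrow> (\<forall>i. \<bar>i\<bar> \<le> int r \<longrightarrow> b (n + i) = b' (n' + i))"
  by (auto simp: window_def map_eq_conv abs_le_iff)

lemma window_const: "window r (\<lambda>_. x) n = replicate (2 * r + 1) x"
proof -
  have "length [- int r .. int r] = 2 * r + 1" by simp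
  then show ?thesis by (simp add: window_def map_replicate_const)
qed

lemma ca_step_radius_1: "ca_step 1 \<delta> c u = \<delta> [c (u - 1), c u, c (u + 1)]"
proof -
  have "[- int 1 .. int 1] = [-1, 0, 1]" by (simp add: upto.simps)
  then show ?thesis by (simp add: ca_step_def)
qed

text \<open>The rule reads the value off any configuration exhibiting the window; on windows
  that never occur, \<open>SOME\<close> picks an arbitrary value.\<close>

lemma local_rule_exists:
  assumes "\<And>x x' n n'. P x \<Longrightarrow> P x' \<Longrightarrow> window r (enc x) n = window r (enc x') n' \<Longrightarrow>
             F x n = F x' n'"
  shows "\<exists>\<delta>. \<forall>x. P x \<longrightarrow> ca_step r \<delta> (enc x) = F x"
proof (intro exI allI impI ext)
  fix x n assume "P x"
  then show "ca_step r (\<lambda>w. SOME v. \<exists>x n. P x \<and> window r (enc x) n = w \<and> F x n = v) (enc x) n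
             = F x n"
    unfolding ca_step_window by (rule someI2) (use assms in blast)+
qed

lemma ca_run_simulation:
  assumes "\<And>x. P x \<Longrightarrow> ca_step r \<delta> (enc x) = enc (f x)" and "\<And>x. P x \<Longrightarrow> P (f x)"
    and "P x"
  shows "ca_run r \<delta> (enc x) t = enc ((f ^^ t) x)"
  using assms(3)
proof (induction t arbitrary: x)
  case (Suc t)
  then show ?case by (simp add: ca_run_def funpow_Suc_right assms(1,2) del: funpow.simps)
qed (simp add: ca_run_def)

lemma phi_sym_nth: "a \<le> L \<Longrightarrow> j < L + 2 \<Longrightarrow> phi_sym L a ! j \<longleftrightarrow> j < 1 + L - a \<or> j = L + 1"
  by (auto simp: phi_sym_def nth_append)

lemma phi_sym_0_nth: "j < L + 2 \<Longrightarrow> phi_sym L 0 ! j"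
  by (auto simp: phi_sym_nth)

lemma nat_mod_less: "nat (n mod (int L + 2)) < L + 2"
proof -
  have "n mod (int L + 2) < int L + 2" by (rule pos_mod_bound) simp
  then show ?thesis by linarith
qed

lemma length_phi_sym: "a \<le> L \<Longrightarrow> length (phi_sym L a) = L + 2"
  by (simp add: phi_sym_def)

lemma inj_phi_sym: "inj (phi_sym L)"
proof
  fix a b assume "phi_sym L a = phi_sym L b"
  then have "length (filter Not (phi_sym L a)) = length (filter Not (phi_sym L b))" by simp
  then show "a = b" by (simp add: phi_sym_def)
qed

lemma phi_conf_eq:
  "phi_conf L c n = phi_sym L (c (n div (int L + 2))) ! nat (n mod (int L + 2))"
proof -
  have "int (L + 2) = int L + 2" by simp
  then show ?thesis by (simp only: phi_conf_def)
qed

lemma phi_conf_block: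
  assumes "0 \<le> j" "j < int L + 2"
  shows "phi_conf L c ((int L + 2) * q + j) = phi_sym L (c q) ! nat j"
  using assms by (simp add: phi_conf_eq)

lemma phi_conf_0: "phi_conf L (\<lambda>_. 0) = (\<lambda>_. True)"
  by (rule ext) (simp only: phi_conf_eq phi_sym_0_nth[OF nat_mod_less])

lemma phi_conf_rising_edge:
  assumes "\<forall>u. c u < L" "\<not> phi_conf L c m" "phi_conf L c (m + 1)"
  shows "m mod (int L + 2) = int L"
proof -
  define q where "q = m div (int L + 2)"
  define j where "j = m mod (int L + 2)"
  have m: "m = (int L + 2) * q + j" and j: "0 \<le> j" "j < int L + 2"
    by (simp_all add: q_def j_def)
  have a: "c q \<le> L" using assms(1) less_imp_le by blast
  have "\<not> (nat j < 1 + L - c q \<or> nat j = L + 1)"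
    using assms(2) phi_conf_block[OF j] phi_sym_nth[OF a] j by (simp add: m)
  then have "j \<le> int L" using j by linarith
  then have j1: "0 \<le> j + 1" "j + 1 < int L + 2" using j by simp_all
  have "phi_sym L (c q) ! nat (j + 1)"
    using assms(3) phi_conf_block[OF j1, of c q] by (simp add: m add.assoc)
  then have "nat (j + 1) < 1 + L - c q \<or> nat (j + 1) = L + 1"
    using phi_sym_nth[OF a, of "nat (j + 1)"] j1 by linarith
  with \<open>\<not> (nat j < 1 + L - c q \<or> nat j = L + 1)\<close> j show ?thesis
    by (simp add: j_def[symmetric]) linarith
qed

lemma phi_conf_window_aligned:
  assumes "\<forall>u. c u < L" "\<forall>u. c' u < L"
    and agree: "\<And>i. \<bar>i\<bar> \<le> 2 * (int L + 2) \<Longrightarrow> phi_conf L c (n + i) = phi_conf L c' (n' + i)"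
    and "\<bar>d\<bar> \<le> 1" "c (n div (int L + 2) + d) \<noteq> 0"
  shows "n mod (int L + 2) = n' mod (int L + 2)"
proof -
  define q where "q = n div (int L + 2)"
  define k where "k = n mod (int L + 2)"
  define m where "m = (int L + 2) * (q + d) + int L"
  define i where "i = m - n"
  have n: "n = (int L + 2) * q + k" and k: "0 \<le> k" "k < int L + 2"
    by (simp_all add: q_def k_def)
  have a: "1 \<le> c (q + d)" "c (q + d) \<le> L" using assms(1,5) less_imp_le q_def by auto
  have edge: "\<not> phi_conf L c m" "phi_conf L c (m + 1)"
    using phi_conf_block[of "int L" L c "q + d"] phi_conf_block[of "int L + 1" L c "q + d"]
      phi_sym_nth[OF a(2), of L] phi_sym_nth[OF a(2), of "L + 1"] a
    by (simp_all add: m_def add.assoc nat_add_distrib)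
  have "i = (int L + 2) * d + int L - k" by (simp add: n i_def m_def algebra_simps)
  moreover have "d = -1 \<or> d = 0 \<or> d = 1" using assms(4) by arith
  ultimately have "\<bar>i\<bar> \<le> 2 * (int L + 2)" "\<bar>i + 1\<bar> \<le> 2 * (int L + 2)"
    using k by (auto simp: abs_le_iff)
  then have "\<not> phi_conf L c' (n' + i)" "phi_conf L c' (n' + i + 1)"
    using edge agree[of i] agree[of "i + 1"] by (simp_all add: i_def add.assoc)
  then have "(n' + i) mod (int L + 2) = int L" by (rule phi_conf_rising_edge[OF assms(2)])
  also have "int L = (n + i) mod (int L + 2)" by (simp add: i_def m_def)
  finally have "(n' + i - i) mod (int L + 2) = (n + i - i) mod (int L + 2)"
    by (rule mod_diff_cong) (rule refl)
  then show ?thesis by simp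
qed

lemma phi_conf_window_blocks_eq:
  assumes "\<forall>u. c u < L" "\<forall>u. c' u < L"
    and agree: "\<And>i. \<bar>i\<bar> \<le> 2 * (int L + 2) \<Longrightarrow> phi_conf L c (n + i) = phi_conf L c' (n' + i)"
    and aligned: "n mod (int L + 2) = n' mod (int L + 2)" and "\<bar>e\<bar> \<le> 1"
  shows "c (n div (int L + 2) + e) = c' (n' div (int L + 2) + e)"
proof -
  define q where "q = n div (int L + 2)"
  define q' where "q' = n' div (int L + 2)"
  define k where "k = n mod (int L + 2)"
  have n: "n = (int L + 2) * q + k" and k: "0 \<le> k" "k < int L + 2"
    by (simp_all add: q_def k_def)
  have n': "n' = (int L + 2) * q' + k" unfolding q'_def k_def aligned by simp
  have a: "c (q + e) \<le> L" "c' (q' + e) \<le> L" using assms(1,2) less_imp_le by blast+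
  have "phi_sym L (c (q + e)) = phi_sym L (c' (q' + e))"
  proof (rule nth_equalityI)
    show "length (phi_sym L (c (q + e))) = length (phi_sym L (c' (q' + e)))"
      using a by (simp add: length_phi_sym)
  next
    fix j assume "j < length (phi_sym L (c (q + e)))"
    then have j: "0 \<le> int j" "int j < int L + 2" using a by (simp_all add: length_phi_sym)
    define i where "i = (int L + 2) * e + int j - k"
    have "e = -1 \<or> e = 0 \<or> e = 1" using assms(5) by arith
    then have "\<bar>i\<bar> \<le> 2 * (int L + 2)" using j k by (auto simp: i_def)
    moreover have "n + i = (int L + 2) * (q + e) + int j" "n' + i = (int L + 2) * (q' + e) + int j"
      by (simp_all add: n n' i_def algebra_simps)
    ultimately show "phi_sym L (c (q + e)) ! j = phi_sym L (c' (q' + e)) ! j"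
      using agree[of i] phi_conf_block[OF j, of c "q + e"] phi_conf_block[OF j, of c' "q' + e"]
      by simp
  qed
  then show ?thesis using inj_phi_sym by (simp add: q_def q'_def inj_eq)
qed

lemma phi_conf_ca_step_1:
  "phi_conf L (ca_step 1 \<delta> c) n =
     phi_sym L (\<delta> [c (n div (int L + 2) - 1), c (n div (int L + 2)), c (n div (int L + 2) + 1)])
       ! nat (n mod (int L + 2))"
  by (simp only: phi_conf_eq ca_step_radius_1)

lemma phi_conf_ca_step_1_determined_by_window:
  assumes valid: "\<forall>u. c u < L" "\<forall>u. c' u < L" and blank: "\<delta> [0, 0, 0] = 0"
    and "window (2 * (L + 2)) (phi_conf L c) n = window (2 * (L + 2)) (phi_conf L c') n'"
  shows "phi_conf L (ca_step 1 \<delta> c) n = phi_conf L (ca_step 1 \<delta> c') n'"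
proof -
  define q where "q = n div (int L + 2)"
  define q' where "q' = n' div (int L + 2)"
  have agree: "\<And>i. \<bar>i\<bar> \<le> 2 * (int L + 2) \<Longrightarrow> phi_conf L c (n + i) = phi_conf L c' (n' + i)"
    using assms(4) by (simp add: window_eq_iff)
  then have agree': "\<And>i. \<bar>i\<bar> \<le> 2 * (int L + 2) \<Longrightarrow> phi_conf L c' (n' + i) = phi_conf L c (n + i)"
    by simp
  show ?thesis
  proof (cases "\<exists>d. \<bar>d\<bar> \<le> 1 \<and> (c (q + d) \<noteq> 0 \<or> c' (q' + d) \<noteq> 0)")
    case True
    then have aligned: "n mod (int L + 2) = n' mod (int L + 2)"
      using phi_conf_window_aligned[OF valid agree] phi_conf_window_aligned[OF valid(2,1) agree']
      unfolding q_def q'_def by metis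
    have "c (q + e) = c' (q' + e)" if "\<bar>e\<bar> \<le> 1" for e
      using phi_conf_window_blocks_eq[OF valid agree aligned that] by (simp add: q_def q'_def)
    from this[of "-1"] this[of 0] this[of 1] show ?thesis
      unfolding phi_conf_ca_step_1 q_def[symmetric] q'_def[symmetric] aligned by simp
  next
    case False
    then have zero: "c (q + d) = 0 \<and> c' (q' + d) = 0" if "\<bar>d\<bar> \<le> 1" for d
      using that by blast
    have "c (q - 1) = 0 \<and> c' (q' - 1) = 0" "c q = 0 \<and> c' q' = 0" "c (q + 1) = 0 \<and> c' (q' + 1) = 0"
      using zero[of "-1"] zero[of 0] zero[of 1] by simp_all
    then show ?thesis
      unfolding phi_conf_ca_step_1 q_def[symmetric] q'_def[symmetric]
      by (simp only: blank phi_sym_0_nth[OF nat_mod_less])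
  qed
qed

lemma phi_conf_simulating_rule_exists:
  assumes "\<delta> [0, 0, 0] = 0"
  shows "\<exists>\<delta>2. \<forall>c. (\<forall>u. c u < L) \<longrightarrow>
           ca_step (2 * (L + 2)) \<delta>2 (phi_conf L c) = phi_conf L (ca_step 1 \<delta> c)"
proof (rule local_rule_exists)
  fix c c' n n'
  assume "\<forall>u. c u < L" "\<forall>u. c' u < L"
    and "window (2 * (L + 2)) (phi_conf L c) n = window (2 * (L + 2)) (phi_conf L c') n'"
  with assms show "phi_conf L (ca_step 1 \<delta> c) n = phi_conf L (ca_step 1 \<delta> c') n'"
    by (intro phi_conf_ca_step_1_determined_by_window)
qed

lemma simulating_rule_all_ones:
  assumes "\<delta> [0, 0, 0] = 0"
    and "ca_step r \<delta>2 (phi_conf L (\<lambda>_. 0)) = phi_conf L (ca_step 1 \<delta> (\<lambda>_. 0))"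
  shows "\<delta>2 (replicate (2 * r + 1) True) = True"
proof -
  have "\<delta>2 (replicate (2 * r + 1) True) = ca_step r \<delta>2 (phi_conf L (\<lambda>_. 0)) 0"
    by (simp only: ca_step_window phi_conf_0 window_const)
  also have "\<dots> = phi_conf L (ca_step 1 \<delta> (\<lambda>_. 0)) 0" by (simp only: assms(2))
  also have "ca_step 1 \<delta> (\<lambda>_. 0) = (\<lambda>_. 0)"
    by (rule ext) (simp only: ca_step_radius_1 assms(1))
  finally show ?thesis by (simp add: phi_conf_0)
qed

theorem lemma1:
  fixes L :: nat and \<delta>' :: "nat list \<Rightarrow> nat"
  assumes "L \<ge> 2"
    and "\<And>xs. length xs = 3 \<Longrightarrow> set xs \<subseteq> {..<L} \<Longrightarrow> \<delta>' xs < L"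
    and "\<delta>' [0, 0, 0] = 0"
  shows "\<exists>\<delta>2 :: bool list \<Rightarrow> bool.
           \<delta>2 (replicate (2 * (2 * (L + 2)) + 1) True) = True \<and>
           (\<forall>t. ca_run (2 * (L + 2)) \<delta>2 (phi_conf L (\<lambda>u. if u = 0 then 1 else 0)) t
                = phi_conf L (ca_run 1 \<delta>' (\<lambda>u. if u = 0 then 1 else 0) t))"
proof -
  define valid :: "(int \<Rightarrow> nat) \<Rightarrow> bool" where "valid c \<longleftrightarrow> (\<forall>u. c u < L)" for c
  obtain \<delta>2 where sim: "\<And>c. valid c \<Longrightarrow>
      ca_step (2 * (L + 2)) \<delta>2 (phi_conf L c) = phi_conf L (ca_step 1 \<delta>' c)"
    using phi_conf_simulating_rule_exists[of \<delta>' L, OF assms(3)] unfolding valid_def by blast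
  have valid_step: "valid (ca_step 1 \<delta>' c)" if "valid c" for c
    using that unfolding valid_def ca_step_radius_1 by (auto intro!: assms(2))
  have valid_init: "valid (\<lambda>u. if u = 0 then 1 else 0)" and valid_0: "valid (\<lambda>_. 0)"
    using assms(1) by (simp_all add: valid_def)
  show ?thesis
  proof (intro exI conjI allI)
    show "\<delta>2 (replicate (2 * (2 * (L + 2)) + 1) True) = True"
      using assms(3) sim[OF valid_0] by (rule simulating_rule_all_ones)
    fix t
    show "ca_run (2 * (L + 2)) \<delta>2 (phi_conf L (\<lambda>u. if u = 0 then 1 else 0)) t
        = phi_conf L (ca_run 1 \<delta>' (\<lambda>u. if u = 0 then 1 else 0) t)"
      using ca_run_simulation[where P = valid and enc = "phi_conf L" and f = "ca_step 1 \<delta>'",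
          OF sim valid_step valid_init]
      by (simp add: ca_run_def)
  qed
qed

end
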